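(* Let $N\ge2$, $p\ge1$, and suppose $f_n\rightarrowtail f$ in $L^p(\mathbb T^N)$. For $1\le j\le N-1$ and $g\in L^1(\mathbb T^N)$ define $\hat g\in L^1(\mathbb T^{N-j})$ by $\hat g(t_{j+1},\dots,t_N)=\int_{\mathbb T^j}g(\cdot,t_{j+1},\dots,t_N)\,d\mu_j$. Then, for each $j=1,\dots,N-1$, $\hat f_n\rightarrowtail\hat f$ in $L^p(\mathbb T^{N-j})$.
   Context: $\mathbb T$ is the unit circle and $\mu_j$ the normalized Lebesgue measure on $\mathbb T^j$. For $M\ge1$, a sequence $f_n\in L^2(\mathbb T^M)$ converges to $f\in L^p(\mathbb T^M)$ ($p\ge1$) "restricted to hyperplanes", written $f_n\rightarrowtail f$ in $L^p(\mathbb T^M)$, if $f_n\to f$ in $L^p(\mathbb T^M)$ and, for each $l=2,\dots,M$ and a.e. $(t_l,\dots,t_M)\in\mathbb T^{M-l+1}$, $f_n(\cdot,t_l,\dots,t_M)\to f(\cdot,t_l,\dots,t_M)$ in $L^p(\mathbb T^{l-1})$ as functions of the first $l-1$ variables. *)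

theory Defs
  imports "HOL-Analysis.Analysis"
begin

text \<open>The unit circle T is modelled as [0,1) with Lebesgue measure (total mass 1,
  i.e. normalized). A point of T^M is a function nat => real whose coordinates
  0,...,M-1 correspond to t_1,...,t_M.\<close>

definition Tcirc :: "real measure" where
  "Tcirc = restrict_space lborel {0..<1}"

definition TM :: "nat \<Rightarrow> (nat \<Rightarrow> real) measure" where
  "TM M = PiM {..<M} (\<lambda>_. Tcirc)"

definition glue :: "nat \<Rightarrow> nat \<Rightarrow> (nat \<Rightarrow> real) \<Rightarrow> (nat \<Rightarrow> real) \<Rightarrow> (nat \<Rightarrow> real)" where
  "glue k M x y = (\<lambda>i. if i < k then x i else if i < M then y (i - k) else undefined)"

definition memLp :: "'a measure \<Rightarrow> real \<Rightarrow> ('a \<Rightarrow> complex) \<Rightarrow> bool" where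
  "memLp Mu p g \<longleftrightarrow> g \<in> borel_measurable Mu \<and>
     (\<integral>\<^sup>+ x. ennreal (cmod (g x) powr p) \<partial>Mu) < \<infinity>"

definition Lp_tendsto :: "'a measure \<Rightarrow> real \<Rightarrow> (nat \<Rightarrow> 'a \<Rightarrow> complex) \<Rightarrow> ('a \<Rightarrow> complex) \<Rightarrow> bool" where
  "Lp_tendsto Mu p fs f \<longleftrightarrow> (\<forall>n. fs n \<in> borel_measurable Mu) \<and> f \<in> borel_measurable Mu \<and>
     ((\<lambda>n. \<integral>\<^sup>+ x. ennreal (cmod (fs n x - f x) powr p) \<partial>Mu) \<longlonglongrightarrow> 0)"

text \<open>Convergence restricted to hyperplanes: f_n in L^2(T^M), f in L^p(T^M).\<close>
definition rconv :: "nat \<Rightarrow> real \<Rightarrow> (nat \<Rightarrow> (nat \<Rightarrow> real) \<Rightarrow> complex) \<Rightarrow> ((nat \<Rightarrow> real) \<Rightarrow> complex) \<Rightarrow> bool" where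
  "rconv M p fs f \<longleftrightarrow>
     (\<forall>n. memLp (TM M) 2 (fs n)) \<and> memLp (TM M) p f \<and> Lp_tendsto (TM M) p fs f \<and>
     (\<forall>l\<in>{2..M}. AE y in TM (M - l + 1).
        Lp_tendsto (TM (l - 1)) p (\<lambda>n x. fs n (glue (l - 1) M x y)) (\<lambda>x. f (glue (l - 1) M x y)))"

definition hat :: "nat \<Rightarrow> nat \<Rightarrow> ((nat \<Rightarrow> real) \<Rightarrow> complex) \<Rightarrow> (nat \<Rightarrow> real) \<Rightarrow> complex" where
  "hat j N g = (\<lambda>y. LINT x|TM j. g (glue j N x y))"

end

theory Submission
  imports Defs "HOL-Probability.Probability"
begin

(* Gluing identifies T^(k+m) with T^m x T^k measure-preservingly, and hat k integrates out
   the T^k factor. Since T^k is a probability space, Jensen's inequality gives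
   |hat g|^p <= hat |g|^p pointwise, so by Tonelli the map hat is a contraction for
   g |-> int |g|^p; being a.e. linear, it carries L^p convergence of f_n to f over to the
   hats. For the hyperplane conditions, gluing is associative, so restricting hat f to a
   hyperplane of T^(N-j) is the same as applying hat to the restriction of f to a hyperplane
   of T^N, where convergence holds by assumption. *)

lemma all_less_add_split:
  "(\<forall>i<k+m. P i) \<longleftrightarrow> (\<forall>i<k. P i) \<and> (\<forall>i<m. P (i+k))" for k m :: nat
proof
  assume "\<forall>i<k+m. P i"
  then show "(\<forall>i<k. P i) \<and> (\<forall>i<m. P (i+k))" by auto
next
  assume "(\<forall>i<k. P i) \<and> (\<forall>i<m. P (i+k))"
  then show "\<forall>i<k+m. P i"
    by (metis add.commute le_add_diff_inverse2 less_diff_conv2 not_le)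
qed

lemma glue_in_PiE_iff:
  assumes "y \<in> extensional {..<m}" "z \<in> extensional {..<k}"
  shows "glue k (k+m) z y \<in> Pi\<^sub>E {..<k+m} A \<longleftrightarrow>
    y \<in> Pi\<^sub>E {..<m} (\<lambda>i. A (i+k)) \<and> z \<in> Pi\<^sub>E {..<k} A"
proof -
  have "glue k (k+m) z y \<in> extensional {..<k+m}"
    by (simp add: glue_def extensional_def)
  moreover have "(\<forall>i<k+m. glue k (k+m) z y i \<in> A i) \<longleftrightarrow>
      (\<forall>i<k. z i \<in> A i) \<and> (\<forall>i<m. y i \<in> A (i+k))"
    unfolding all_less_add_split by (simp add: glue_def)
  ultimately show ?thesis
    using assms by (auto simp: PiE_iff)
qed

lemma measurable_glue:
  "(\<lambda>w. glue k (k+m) (snd w) (fst w))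
    \<in> (PiM {..<m} (\<lambda>_. M) \<Otimes>\<^sub>M PiM {..<k} (\<lambda>_. M)) \<rightarrow>\<^sub>M PiM {..<k+m} (\<lambda>_. M)"
proof (rule measurable_PiM_single')
  fix i assume "i \<in> {..<k+m}"
  then show "(\<lambda>w. glue k (k+m) (snd w) (fst w) i)
      \<in> (PiM {..<m} (\<lambda>_. M) \<Otimes>\<^sub>M PiM {..<k} (\<lambda>_. M)) \<rightarrow>\<^sub>M M"
    by (cases "i < k") (simp_all add: glue_def)
qed (auto simp: space_pair_measure glue_def space_PiM PiE_iff extensional_def)

lemma prod_lessThan_add:
  fixes g :: "nat \<Rightarrow> 'a::comm_monoid_mult"
  shows "(\<Prod>i<k+m. g i) = (\<Prod>i<k. g i) * (\<Prod>i<m. g (i+k))"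
  by (induction m) (simp_all add: ac_simps)

lemma distr_glue_PiM:
  fixes M :: "real measure"
  assumes "sigma_finite_measure M"
  shows "distr (PiM {..<m} (\<lambda>_. M) \<Otimes>\<^sub>M PiM {..<k} (\<lambda>_. M)) (PiM {..<k+m} (\<lambda>_. M))
     (\<lambda>w. glue k (k+m) (snd w) (fst w)) = PiM {..<k+m} (\<lambda>_. M)"
  (is "distr (?Pm \<Otimes>\<^sub>M ?Pk) ?P ?g = ?P")
proof -
  interpret PS: product_sigma_finite "\<lambda>_. M"
    by (simp add: product_sigma_finite_def assms)
  show ?thesis
  proof (rule PS.PiM_eqI)
    fix A assume A: "\<And>i. i \<in> {..<k+m} \<Longrightarrow> A i \<in> sets M"
    have "?g -` Pi\<^sub>E {..<k+m} A \<inter> space (?Pm \<Otimes>\<^sub>M ?Pk)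
        = Pi\<^sub>E {..<m} (\<lambda>i. A (i+k)) \<times> Pi\<^sub>E {..<k} A"
    proof -
      have sub: "Pi\<^sub>E {..<m} (\<lambda>i. A (i+k)) \<times> Pi\<^sub>E {..<k} A \<subseteq> space (?Pm \<Otimes>\<^sub>M ?Pk)"
        using A[THEN sets.sets_into_space] unfolding space_pair_measure space_PiM
        by (intro Sigma_mono PiE_mono) (auto simp: add.commute)
      have iff: "?g w \<in> Pi\<^sub>E {..<k+m} A \<longleftrightarrow>
          w \<in> Pi\<^sub>E {..<m} (\<lambda>i. A (i+k)) \<times> Pi\<^sub>E {..<k} A"
        if "w \<in> space (?Pm \<Otimes>\<^sub>M ?Pk)" for w
        using that glue_in_PiE_iff[of "fst w" m "snd w" k A]
        by (simp add: space_pair_measure space_PiM mem_Times_iff PiE_iff)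
      show ?thesis
      proof (intro equalityI subsetI)
        fix w assume "w \<in> ?g -` Pi\<^sub>E {..<k+m} A \<inter> space (?Pm \<Otimes>\<^sub>M ?Pk)"
        then show "w \<in> Pi\<^sub>E {..<m} (\<lambda>i. A (i+k)) \<times> Pi\<^sub>E {..<k} A"
          using iff[of w] by simp
      next
        fix w assume w: "w \<in> Pi\<^sub>E {..<m} (\<lambda>i. A (i+k)) \<times> Pi\<^sub>E {..<k} A"
        with sub have "w \<in> space (?Pm \<Otimes>\<^sub>M ?Pk)" by (rule subsetD)
        with w iff[of w] show "w \<in> ?g -` Pi\<^sub>E {..<k+m} A \<inter> space (?Pm \<Otimes>\<^sub>M ?Pk)"
          by simp
      qed
    qed
    then have "emeasure (distr (?Pm \<Otimes>\<^sub>M ?Pk) ?P ?g) (Pi\<^sub>E {..<k+m} A)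
        = emeasure (?Pm \<Otimes>\<^sub>M ?Pk) (Pi\<^sub>E {..<m} (\<lambda>i. A (i+k)) \<times> Pi\<^sub>E {..<k} A)"
      using A measurable_glue by (subst emeasure_distr) (auto intro!: sets_PiM_I_finite)
    also have "\<dots> = emeasure ?Pm (Pi\<^sub>E {..<m} (\<lambda>i. A (i+k))) * emeasure ?Pk (Pi\<^sub>E {..<k} A)"
      using A
      by (intro sigma_finite_measure.emeasure_pair_measure_Times PS.sigma_finite)
        (auto intro!: sets_PiM_I_finite)
    also have "\<dots> = (\<Prod>i<m. emeasure M (A (i+k))) * (\<Prod>i<k. emeasure M (A i))"
    proof -
      have "emeasure ?Pm (Pi\<^sub>E {..<m} (\<lambda>i. A (i+k))) = (\<Prod>i<m. emeasure M (A (i+k)))"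
          "emeasure ?Pk (Pi\<^sub>E {..<k} A) = (\<Prod>i<k. emeasure M (A i))"
        using A by (auto intro!: PS.emeasure_PiM)
      then show ?thesis by simp
    qed
    also have "\<dots> = (\<Prod>i<k+m. emeasure M (A i))"
      by (simp add: prod_lessThan_add mult.commute)
    finally show "emeasure (distr (?Pm \<Otimes>\<^sub>M ?Pk) ?P ?g) (Pi\<^sub>E {..<k+m} A)
        = (\<Prod>i<k+m. emeasure M (A i))" .
  qed simp_all
qed

lemma powr_above_tangent:
  fixes a t p :: real
  assumes a: "a > 0" and t: "t \<ge> 0" and p: "p \<ge> 1"
  shows "a powr p + p * a powr (p - 1) * (t - a) \<le> t powr p"
proof (cases "t = 0")
  case True
  have "p * a powr (p - 1) * a = p * a powr p"
    using a by (simp add: powr_diff field_simps)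
  then show ?thesis using True a p by (simp add: algebra_simps)
next
  case False
  have "p * a powr (p - 1) * (t - a) \<le> t powr p - a powr p"
  proof (rule convex_on_imp_above_tangent[where A="{0<..}"])
    show "((\<lambda>x. x powr p) has_field_derivative p * a powr (p - 1)) (at a within {0<..})"
      using a by (auto intro!: derivative_eq_intros)
  qed (use powr_convex[OF p] a t False in \<open>auto simp: interior_open\<close>)
  then show ?thesis by simp
qed

(* Not an instance of the library's jensens_inequality, which needs an open interval
   containing the values of g: here g may vanish, and powr_convex only covers {0<..}. *)
lemma (in prob_space) jensens_inequality_powr:
  fixes g :: "'a \<Rightarrow> real"
  assumes g: "integrable M g" "\<And>x. x \<in> space M \<Longrightarrow> g x \<ge> 0"
    and gp: "integrable M (\<lambda>x. g x powr p)" and p: "p \<ge> 1"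
  shows "(\<integral>x. g x \<partial>M) powr p \<le> (\<integral>x. g x powr p \<partial>M)"
proof -
  define a where "a = (\<integral>x. g x \<partial>M)"
  have "a \<ge> 0" unfolding a_def using g by (auto intro!: integral_nonneg_AE)
  show ?thesis
  proof (cases "a = 0")
    case True
    then show ?thesis unfolding a_def[symmetric] by (auto intro!: integral_nonneg_AE)
  next
    case False
    with \<open>a \<ge> 0\<close> have a: "a > 0" by simp
    have "a powr p = (\<integral>x. a powr p + p * a powr (p - 1) * (g x - a) \<partial>M)"
      using g(1) by (simp add: integral_add integral_diff prob_space a_def)
    also have "\<dots> \<le> (\<integral>x. g x powr p \<partial>M)"
      using g gp powr_above_tangent[OF a _ p] by (intro integral_mono) auto
    finally show ?thesis unfolding a_def .
  qed
qed

lemma (in prob_space) integrable_if_memLp: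
  assumes h: "memLp M q h" and q: "q \<ge> 1"
  shows "integrable M h"
proof (rule Bochner_Integration.integrable_bound)
  show "integrable M (\<lambda>x. 1 + cmod (h x) powr q)"
  proof (rule Bochner_Integration.integrable_add)
    show "integrable M (\<lambda>x. cmod (h x) powr q)"
      using h by (auto simp: memLp_def intro!: integrableI_bounded)
  qed simp
  show "h \<in> borel_measurable M" using h by (simp add: memLp_def)
  have "cmod z \<le> 1 + cmod z powr q" for z
  proof (cases "cmod z \<le> 1")
    case False
    then have "cmod z powr 1 \<le> cmod z powr q" using q by (intro powr_mono) auto
    then show ?thesis using False by simp
  qed (simp add: add_increasing2)
  then show "AE x in M. norm (h x) \<le> norm (1 + cmod (h x) powr q)" by simp
qed

lemma (in prob_space) norm_integral_powr_le:
  fixes h :: "'a \<Rightarrow> complex"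
  assumes h: "h \<in> borel_measurable M" and p: "p \<ge> 1"
  shows "ennreal (cmod (\<integral>x. h x \<partial>M) powr p) \<le> (\<integral>\<^sup>+x. ennreal (cmod (h x) powr p) \<partial>M)"
proof (cases "(\<integral>\<^sup>+x. ennreal (cmod (h x) powr p) \<partial>M) = \<infinity>")
  case False
  then have "memLp M p h" using h by (simp add: memLp_def less_top)
  then have hi: "integrable M h" using p by (rule integrable_if_memLp)
  have gp: "integrable M (\<lambda>x. cmod (h x) powr p)"
    using False h by (intro integrableI_bounded) (auto simp: less_top)
  have "cmod (\<integral>x. h x \<partial>M) powr p \<le> (\<integral>x. cmod (h x) \<partial>M) powr p"
    using p by (intro powr_mono2 integral_norm_bound) auto
  also have "\<dots> \<le> (\<integral>x. cmod (h x) powr p \<partial>M)"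
    using hi gp p by (intro jensens_inequality_powr) auto
  finally show ?thesis
    using gp by (simp add: nn_integral_eq_integral ennreal_leI)
qed simp

lemma prob_space_Tcirc: "prob_space Tcirc"
  unfolding Tcirc_def
  by (rule prob_spaceI) (simp add: space_restrict_space emeasure_restrict_space)

lemma prob_space_TM: "prob_space (TM M)"
  unfolding TM_def by (rule prob_space_PiM) (rule prob_space_Tcirc)

interpretation Tcirc: prob_space Tcirc by (rule prob_space_Tcirc)
interpretation TM: prob_space "TM M" for M by (rule prob_space_TM)

lemma measurable_glue_TM:
  "(\<lambda>w. glue k (k+m) (snd w) (fst w)) \<in> (TM m \<Otimes>\<^sub>M TM k) \<rightarrow>\<^sub>M TM (k+m)"
  unfolding TM_def by (rule measurable_glue)

lemma measurable_glue_slice: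
  "y \<in> space (TM m) \<Longrightarrow> (\<lambda>z. glue k (k+m) z y) \<in> TM k \<rightarrow>\<^sub>M TM (k+m)"
  using measurable_Pair2[OF measurable_glue_TM] by simp

lemma distr_glue_TM:
  "distr (TM m \<Otimes>\<^sub>M TM k) (TM (k+m)) (\<lambda>w. glue k (k+m) (snd w) (fst w)) = TM (k+m)"
  unfolding TM_def by (rule distr_glue_PiM) (rule Tcirc.sigma_finite_measure_axioms)

lemma nn_integral_TM_glue:
  assumes "h \<in> borel_measurable (TM (k+m))"
  shows "(\<integral>\<^sup>+x. h x \<partial>TM (k+m)) = (\<integral>\<^sup>+y. (\<integral>\<^sup>+z. h (glue k (k+m) z y) \<partial>TM k) \<partial>TM m)"
proof -
  have "(\<integral>\<^sup>+x. h x \<partial>TM (k+m)) = (\<integral>\<^sup>+w. h (glue k (k+m) (snd w) (fst w)) \<partial>(TM m \<Otimes>\<^sub>M TM k))"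
    using assms measurable_glue_TM
    by (subst distr_glue_TM[symmetric]) (simp add: nn_integral_distr)
  also have "\<dots> = (\<integral>\<^sup>+y. (\<integral>\<^sup>+z. h (glue k (k+m) z y) \<partial>TM k) \<partial>TM m)"
    using measurable_comp[OF measurable_glue_TM assms]
    by (subst TM.nn_integral_fst[symmetric]) (simp_all add: comp_def split_beta')
  finally show ?thesis .
qed

lemma AE_integrable_glue_slice:
  fixes h :: "_ \<Rightarrow> complex"
  assumes "integrable (TM (k+m)) h"
  shows "AE y in TM m. integrable (TM k) (\<lambda>z. h (glue k (k+m) z y))"
proof -
  interpret pair_sigma_finite "TM m" "TM k"
    by (simp add: pair_sigma_finite_def TM.sigma_finite_measure_axioms)
  have "integrable (distr (TM m \<Otimes>\<^sub>M TM k) (TM (k+m)) (\<lambda>w. glue k (k+m) (snd w) (fst w))) h"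
    using assms by (simp add: distr_glue_TM)
  then have "integrable (TM m \<Otimes>\<^sub>M TM k) (\<lambda>w. h (glue k (k+m) (snd w) (fst w)))"
    using measurable_glue_TM borel_measurable_integrable[OF assms]
    by (subst (asm) integrable_distr_eq) auto
  from AE_integrable_fst'[OF this] show ?thesis by simp
qed

lemma borel_measurable_hat:
  fixes h :: "_ \<Rightarrow> complex"
  assumes "h \<in> borel_measurable (TM (k+m))"
  shows "hat k (k+m) h \<in> borel_measurable (TM m)"
  unfolding hat_def
  using measurable_comp[OF measurable_glue_TM assms]
  by (intro TM.borel_measurable_lebesgue_integral) (simp add: comp_def split_beta')

lemma AE_memLp_glue_slice:
  assumes "memLp (TM (k+m)) q h"
  shows "AE y in TM m. memLp (TM k) q (\<lambda>z. h (glue k (k+m) z y))"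
proof -
  have h: "h \<in> borel_measurable (TM (k+m))"
    and fin: "(\<integral>\<^sup>+x. ennreal (cmod (h x) powr q) \<partial>TM (k+m)) < \<infinity>"
    using assms by (auto simp: memLp_def)
  have "(\<lambda>(y, z). ennreal (cmod (h (glue k (k+m) z y)) powr q)) \<in> borel_measurable (TM m \<Otimes>\<^sub>M TM k)"
    using measurable_comp[OF measurable_glue_TM h] by (simp add: comp_def split_beta')
  from TM.borel_measurable_nn_integral_fst[OF this]
  have "(\<lambda>y. \<integral>\<^sup>+z. ennreal (cmod (h (glue k (k+m) z y)) powr q) \<partial>TM k) \<in> borel_measurable (TM m)"
    by simp
  moreover have "(\<integral>\<^sup>+y. (\<integral>\<^sup>+z. ennreal (cmod (h (glue k (k+m) z y)) powr q) \<partial>TM k) \<partial>TM m) \<noteq> \<infinity>"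
    using fin nn_integral_TM_glue[of "\<lambda>x. ennreal (cmod (h x) powr q)"] h by simp
  ultimately have "AE y in TM m. (\<integral>\<^sup>+z. ennreal (cmod (h (glue k (k+m) z y)) powr q) \<partial>TM k) \<noteq> \<infinity>"
    by (rule nn_integral_PInf_AE)
  then show ?thesis
    using AE_space
  proof eventually_elim
    case (elim y)
    then show ?case
      using measurable_comp[OF measurable_glue_slice[OF elim(2)] h]
      by (simp add: memLp_def comp_def less_top)
  qed
qed

lemma nn_integral_hat_powr_le:
  fixes h :: "_ \<Rightarrow> complex"
  assumes h: "h \<in> borel_measurable (TM (k+m))" and p: "p \<ge> 1"
  shows "(\<integral>\<^sup>+y. ennreal (cmod (hat k (k+m) h y) powr p) \<partial>TM m)
    \<le> (\<integral>\<^sup>+x. ennreal (cmod (h x) powr p) \<partial>TM (k+m))"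
proof -
  have "(\<integral>\<^sup>+y. ennreal (cmod (hat k (k+m) h y) powr p) \<partial>TM m)
      \<le> (\<integral>\<^sup>+y. (\<integral>\<^sup>+z. ennreal (cmod (h (glue k (k+m) z y)) powr p) \<partial>TM k) \<partial>TM m)"
    unfolding hat_def using measurable_comp[OF measurable_glue_slice h] p
    by (intro nn_integral_mono TM.norm_integral_powr_le) (simp_all add: comp_def)
  also have "\<dots> = (\<integral>\<^sup>+x. ennreal (cmod (h x) powr p) \<partial>TM (k+m))"
    using h by (simp add: nn_integral_TM_glue)
  finally show ?thesis .
qed

lemma memLp_hat:
  assumes "memLp (TM (k+m)) q h" "q \<ge> 1"
  shows "memLp (TM m) q (hat k (k+m) h)"
  using assms borel_measurable_hat le_less_trans[OF nn_integral_hat_powr_le]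
  unfolding memLp_def by blast

lemma AE_hat_diff:
  fixes g h :: "_ \<Rightarrow> complex"
  assumes "integrable (TM (k+m)) g" "integrable (TM (k+m)) h"
  shows "AE y in TM m. hat k (k+m) g y - hat k (k+m) h y = hat k (k+m) (\<lambda>x. g x - h x) y"
  using AE_integrable_glue_slice[OF assms(1)] AE_integrable_glue_slice[OF assms(2)]
  by eventually_elim (simp add: hat_def)

lemma Lp_tendsto_hat:
  assumes gs: "\<And>n. integrable (TM (k+m)) (gs n)" and g: "integrable (TM (k+m)) g"
    and lim: "Lp_tendsto (TM (k+m)) p gs g" and p: "p \<ge> 1"
  shows "Lp_tendsto (TM m) p (\<lambda>n. hat k (k+m) (gs n)) (hat k (k+m) g)"
  unfolding Lp_tendsto_def
proof (intro conjI allI)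
  show "hat k (k+m) (gs n) \<in> borel_measurable (TM m)" for n
    using gs by (simp add: borel_measurable_hat)
  show "hat k (k+m) g \<in> borel_measurable (TM m)"
    using g by (simp add: borel_measurable_hat)
  have le: "(\<integral>\<^sup>+y. ennreal (cmod (hat k (k+m) (gs n) y - hat k (k+m) g y) powr p) \<partial>TM m)
      \<le> (\<integral>\<^sup>+x. ennreal (cmod (gs n x - g x) powr p) \<partial>TM (k+m))" for n
  proof -
    have "(\<integral>\<^sup>+y. ennreal (cmod (hat k (k+m) (gs n) y - hat k (k+m) g y) powr p) \<partial>TM m)
        = (\<integral>\<^sup>+y. ennreal (cmod (hat k (k+m) (\<lambda>x. gs n x - g x) y) powr p) \<partial>TM m)"
      using AE_hat_diff[OF gs g, of n] by (intro nn_integral_cong_AE) (simp add: eventually_mono)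
    also have "\<dots> \<le> (\<integral>\<^sup>+x. ennreal (cmod (gs n x - g x) powr p) \<partial>TM (k+m))"
      using gs g p by (intro nn_integral_hat_powr_le) auto
    finally show ?thesis .
  qed
  have lim0: "(\<lambda>n. \<integral>\<^sup>+x. ennreal (cmod (gs n x - g x) powr p) \<partial>TM (k+m)) \<longlonglongrightarrow> 0"
    using lim by (simp add: Lp_tendsto_def)
  show "(\<lambda>n. \<integral>\<^sup>+y. ennreal (cmod (hat k (k+m) (gs n) y - hat k (k+m) g y) powr p) \<partial>TM m)
      \<longlonglongrightarrow> 0"
    by (rule tendsto_sandwich[OF _ _ tendsto_const lim0]) (simp_all add: le)
qed

lemma glue_glue:
  "glue j (j+r+s) z (glue r (r+s) x y) = glue (j+r) (j+r+s) (glue j (j+r) z x) y"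
  by (rule ext) (auto simp: glue_def)

lemma hat_glue:
  "hat j (j+r+s) g (glue r (r+s) x y) = hat j (j+r) (\<lambda>z. g (glue (j+r) (j+r+s) z y)) x"
  unfolding hat_def glue_glue by (simp add: add.assoc)

lemma AE_Lp_tendsto_hat_slice:
  fixes fs :: "nat \<Rightarrow> (nat \<Rightarrow> real) \<Rightarrow> complex" and f :: "(nat \<Rightarrow> real) \<Rightarrow> complex"
  assumes p: "p \<ge> 1"
    and fs: "\<And>n. memLp (TM (j+r+s)) 2 (fs n)" and f: "memLp (TM (j+r+s)) p f"
    and lim: "AE y in TM s. Lp_tendsto (TM (j+r)) p
      (\<lambda>n x. fs n (glue (j+r) (j+r+s) x y)) (\<lambda>x. f (glue (j+r) (j+r+s) x y))"
  shows "AE y in TM s. Lp_tendsto (TM r) p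
    (\<lambda>n x. hat j (j+r+s) (fs n) (glue r (r+s) x y)) (\<lambda>x. hat j (j+r+s) f (glue r (r+s) x y))"
proof -
  have "AE y in TM s. \<forall>n. memLp (TM (j+r)) 2 (\<lambda>z. fs n (glue (j+r) (j+r+s) z y))"
    using fs by (simp add: AE_all_countable AE_memLp_glue_slice)
  moreover have "AE y in TM s. memLp (TM (j+r)) p (\<lambda>z. f (glue (j+r) (j+r+s) z y))"
    using f by (rule AE_memLp_glue_slice)
  ultimately show ?thesis
    using lim
  proof eventually_elim
    case (elim y)
    have "integrable (TM (j+r)) (\<lambda>z. fs n (glue (j+r) (j+r+s) z y))" for n
      using elim(1) by (intro TM.integrable_if_memLp[of _ 2]) auto
    moreover have "integrable (TM (j+r)) (\<lambda>z. f (glue (j+r) (j+r+s) z y))"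
      using elim(2) p by (rule TM.integrable_if_memLp)
    ultimately have "Lp_tendsto (TM r) p (\<lambda>n. hat j (j+r) (\<lambda>z. fs n (glue (j+r) (j+r+s) z y)))
        (hat j (j+r) (\<lambda>z. f (glue (j+r) (j+r+s) z y)))"
      using elim(3) p by (rule Lp_tendsto_hat)
    then show ?case by (simp only: hat_glue)
  qed
qed

lemma rconv_hat:
  assumes p: "p \<ge> 1" and conv: "rconv (j+m) p fs f"
  shows "rconv m p (\<lambda>n. hat j (j+m) (fs n)) (hat j (j+m) f)"
proof -
  have fs: "\<And>n. memLp (TM (j+m)) 2 (fs n)" and f: "memLp (TM (j+m)) p f"
    and lim: "Lp_tendsto (TM (j+m)) p fs f"
    and hyper: "\<forall>l\<in>{2..j+m}. AE y in TM (j+m - l + 1). Lp_tendsto (TM (l - 1)) p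
        (\<lambda>n x. fs n (glue (l - 1) (j+m) x y)) (\<lambda>x. f (glue (l - 1) (j+m) x y))"
    using conv unfolding rconv_def by blast+
  show ?thesis
    unfolding rconv_def
  proof (intro conjI allI ballI)
    show "memLp (TM m) 2 (hat j (j+m) (fs n))" for n
      using fs by (simp add: memLp_hat)
    show "memLp (TM m) p (hat j (j+m) f)"
      using f p by (rule memLp_hat)
    show "Lp_tendsto (TM m) p (\<lambda>n. hat j (j+m) (fs n)) (hat j (j+m) f)"
      using TM.integrable_if_memLp[OF fs] TM.integrable_if_memLp[OF f p] lim p
      by (rule Lp_tendsto_hat) simp
  next
    fix l assume l: "l \<in> {2..m}"
    define r s where "r = l - 1" and "s = m - l + 1"
    have m: "m = r + s" and jm: "j + m = j + r + s" and idx: "j + l \<in> {2..j+m}"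
      and shift: "j + l - 1 = j + r" "j + r + s - (j + l) + 1 = s"
      using l by (auto simp: r_def s_def)
    have "AE y in TM s. Lp_tendsto (TM (j+r)) p
        (\<lambda>n x. fs n (glue (j+r) (j+r+s) x y)) (\<lambda>x. f (glue (j+r) (j+r+s) x y))"
      using bspec[OF hyper idx] unfolding jm shift .
    with fs f p have "AE y in TM s. Lp_tendsto (TM r) p
        (\<lambda>n x. hat j (j+r+s) (fs n) (glue r (r+s) x y)) (\<lambda>x. hat j (j+r+s) f (glue r (r+s) x y))"
      unfolding jm by (intro AE_Lp_tendsto_hat_slice) auto
    then show "AE y in TM (m - l + 1). Lp_tendsto (TM (l - 1)) p
        (\<lambda>n x. hat j (j+m) (fs n) (glue (l - 1) m x y)) (\<lambda>x. hat j (j+m) f (glue (l - 1) m x y))"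
      unfolding r_def[symmetric] s_def[symmetric] unfolding m by (simp only: add.assoc)
  qed
qed

theorem lemma7p2:
  fixes N :: nat and p :: real
    and fs :: "nat \<Rightarrow> (nat \<Rightarrow> real) \<Rightarrow> complex" and f :: "(nat \<Rightarrow> real) \<Rightarrow> complex"
  assumes "N \<ge> 2" and "p \<ge> 1" and "rconv N p fs f"
  shows "\<forall>j\<in>{1..N-1}. rconv (N - j) p (\<lambda>n. hat j N (fs n)) (hat j N f)"
proof
  fix j assume "j \<in> {1..N-1}"
  then have N: "j + (N - j) = N" by auto
  show "rconv (N - j) p (\<lambda>n. hat j N (fs n)) (hat j N f)"
    using rconv_hat[of p j "N - j" fs f] assms(2,3) unfolding N by blast
qed

end
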